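(* Let $(X,\tau)$ and $(Y,\sigma)$ be fuzzifying topological spaces, $f:X\to Y$, and let $\beta^X_P\in\Im(P(X))$ be a pre-base of $\tau_P$. Then $$O_P(f)=\inf_{B\subseteq X}\min\big(1,\ 1-\beta_P^X(B)+\sigma_P(f(B))\big),$$ i.e. $O_P(f)=[\forall B(B\in\beta^X_P\to f(B)\in\sigma_P)]$.
   Context: A fuzzifying topology on $Z$ is $\tau:P(Z)\to[0,1]$ with $\tau(Z)=1$, $\tau(A\cap B)\ge\min(\tau(A),\tau(B))$, $\tau(\bigcup A_\lambda)\ge\inf\tau(A_\lambda)$. $N_x(A)=\sup_{x\in B\subseteq A}\tau(B)$; $Cl(A)(x)=1-N_x(Z\setminus A)$; for $\mu:Z\to[0,1]$, $Int(\mu)(x)=\sup_{x\in B}\min(\tau(B),\inf_{y\in B}\mu(y))$; pre-open degrees $\tau_P(A)=\inf_{x\in A}Int(Cl(A))(x)$ (similarly $\sigma_P$ for $(Y,\sigma)$); $N^P_x(A)=\sup_{x\in B\subseteq A}\tau_P(B)$. A pre-base of $\tau_P$ is $\beta\in\Im(P(X))$ with $\beta\le\tau_P$ pointwise and $N^P_x(A)\le\sup_{x\in B\subseteq A}\beta(B)$ for all $x\in X$, $A\subseteq X$. Fuzzifying pre-openness: $O_P(f)=\inf_{U\subseteq X}\min(1,1-\tau_P(U)+\sigma_P(f(U)))$. *)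

theory Defs
  imports "HOL-Analysis.Analysis"
begin

text \<open>Suprema/infima are taken in the
complete lattice [0,1]: sup of the empty family is 0, inf of the empty family is 1.
This is realised by inserting 0 (resp. 1) into the set, harmless for [0,1]-valued data.\<close>

definition sup01 :: "real set \<Rightarrow> real" where
  "sup01 S = Sup (insert 0 S)"

definition inf01 :: "real set \<Rightarrow> real" where
  "inf01 S = Inf (insert 1 S)"

definition fuzzy_set :: "('a \<Rightarrow> real) \<Rightarrow> bool" where
  "fuzzy_set \<mu> \<longleftrightarrow> (\<forall>a. 0 \<le> \<mu> a \<and> \<mu> a \<le> 1)"

text \<open>Fuzzifying topology on the whole type 'a (Z = UNIV).\<close>
definition fuzzifying_topology :: "('a set \<Rightarrow> real) \<Rightarrow> bool" where
  "fuzzifying_topology \<tau> \<longleftrightarrow>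
     fuzzy_set \<tau> \<and> \<tau> UNIV = 1 \<and>
     (\<forall>A B. \<tau> (A \<inter> B) \<ge> min (\<tau> A) (\<tau> B)) \<and>
     (\<forall>\<A>. \<tau> (\<Union>\<A>) \<ge> inf01 (\<tau> ` \<A>))"

definition nbhd :: "('a set \<Rightarrow> real) \<Rightarrow> 'a \<Rightarrow> 'a set \<Rightarrow> real" where
  "nbhd \<tau> x A = sup01 {\<tau> B | B. x \<in> B \<and> B \<subseteq> A}"

definition fcl :: "('a set \<Rightarrow> real) \<Rightarrow> 'a set \<Rightarrow> 'a \<Rightarrow> real" where
  "fcl \<tau> A x = 1 - nbhd \<tau> x (- A)"

definition fint :: "('a set \<Rightarrow> real) \<Rightarrow> ('a \<Rightarrow> real) \<Rightarrow> 'a \<Rightarrow> real" where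
  "fint \<tau> \<mu> x = sup01 {min (\<tau> B) (inf01 (\<mu> ` B)) | B. x \<in> B}"

definition preopen :: "('a set \<Rightarrow> real) \<Rightarrow> 'a set \<Rightarrow> real" where
  "preopen \<tau> A = inf01 ((\<lambda>x. fint \<tau> (fcl \<tau> A) x) ` A)"

definition pre_nbhd :: "('a set \<Rightarrow> real) \<Rightarrow> 'a \<Rightarrow> 'a set \<Rightarrow> real" where
  "pre_nbhd \<tau> x A = sup01 {preopen \<tau> B | B. x \<in> B \<and> B \<subseteq> A}"

definition is_prebase :: "('a set \<Rightarrow> real) \<Rightarrow> ('a set \<Rightarrow> real) \<Rightarrow> bool" where
  "is_prebase \<tau> \<beta> \<longleftrightarrow> fuzzy_set \<beta> \<and> (\<forall>B. \<beta> B \<le> preopen \<tau> B) \<and>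
     (\<forall>x A. pre_nbhd \<tau> x A \<le> sup01 {\<beta> B | B. x \<in> B \<and> B \<subseteq> A})"

definition pre_open_deg :: "('a set \<Rightarrow> real) \<Rightarrow> ('b set \<Rightarrow> real) \<Rightarrow> ('a \<Rightarrow> 'b) \<Rightarrow> real" where
  "pre_open_deg \<tau> \<sigma> f = inf01 {min 1 (1 - preopen \<tau> U + preopen \<sigma> (f ` U)) | U. True}"

end

theory Submission
  imports Defs
begin

text \<open>Write \<open>g B = \<sigma>\<^sub>P(f(B))\<close>; both sides of the claim are the subsethood degree
\<open>[\<mu> \<subseteq> g]\<close> for \<open>\<mu> = \<tau>\<^sub>P\<close> and \<open>\<mu> = \<beta>\<close>. Since \<open>\<beta> \<le> \<tau>\<^sub>P\<close>, subsethood is antitone in \<open>\<mu>\<close>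
and one inequality is immediate. Conversely, if \<open>\<beta> B \<le> c + g B\<close> for all \<open>B\<close>, then for
\<open>x \<in> U\<close> the pre-base property gives
\<open>\<tau>\<^sub>P(U) \<le> N\<^sup>P\<^sub>x(U) \<le> sup {\<beta> B | x \<in> B \<subseteq> U} \<le> c + Int(Cl(f U))(f x)\<close>,
because \<open>\<sigma>\<^sub>P(f B) \<le> Int(Cl(f B))(f x) \<le> Int(Cl(f U))(f x)\<close> by monotonicity of closure and
interior; taking the infimum over \<open>x \<in> U\<close> yields \<open>\<tau>\<^sub>P(U) \<le> c + g U\<close>.\<close>

lemma inf01_le: "bdd_below (S::real set) \<Longrightarrow> s \<in> S \<Longrightarrow> inf01 S \<le> s"
  unfolding inf01_def by (rule cInf_lower) auto

lemma inf01_le_1: "bdd_below (S::real set) \<Longrightarrow> inf01 S \<le> 1"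
  unfolding inf01_def by (rule cInf_lower) auto

lemma inf01_greatest: "c \<le> 1 \<Longrightarrow> (\<And>s. s \<in> S \<Longrightarrow> c \<le> s) \<Longrightarrow> c \<le> inf01 (S::real set)"
  unfolding inf01_def by (rule cInf_greatest) auto

lemma sup01_upper: "bdd_above (S::real set) \<Longrightarrow> s \<in> S \<Longrightarrow> s \<le> sup01 S"
  unfolding sup01_def by (rule cSup_upper) auto

lemma sup01_nonneg: "bdd_above (S::real set) \<Longrightarrow> 0 \<le> sup01 S"
  unfolding sup01_def by (rule cSup_upper) auto

lemma sup01_least: "0 \<le> c \<Longrightarrow> (\<And>s. s \<in> S \<Longrightarrow> s \<le> c) \<Longrightarrow> sup01 (S::real set) \<le> c"
  unfolding sup01_def by (rule cSup_least) auto

definition fuzzy_subsethood :: "('c \<Rightarrow> real) \<Rightarrow> ('c \<Rightarrow> real) \<Rightarrow> real" where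
  "fuzzy_subsethood \<mu> \<nu> = inf01 {min 1 (1 - \<mu> U + \<nu> U) | U. True}"

lemma pre_open_deg_eq_fuzzy_subsethood:
  "pre_open_deg \<tau> \<sigma> f = fuzzy_subsethood (preopen \<tau>) (\<lambda>U. preopen \<sigma> (f ` U))"
  unfolding pre_open_deg_def fuzzy_subsethood_def ..

context
  fixes \<mu> \<nu> :: "'c \<Rightarrow> real"
  assumes \<mu>_le_1: "\<And>U. \<mu> U \<le> 1" and \<nu>_nonneg: "\<And>U. 0 \<le> \<nu> U"
begin

lemma bdd_below_subsethood_terms: "bdd_below {min 1 (1 - \<mu> U + \<nu> U) | U. True}"
proof (rule bdd_belowI[of _ 0])
  fix s assume "s \<in> {min 1 (1 - \<mu> U + \<nu> U) | U. True}"
  then obtain U where "s = min 1 (1 - \<mu> U + \<nu> U)" by blast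
  then show "0 \<le> s" using \<mu>_le_1[of U] \<nu>_nonneg[of U] by simp
qed

lemma fuzzy_subsethood_le_1: "fuzzy_subsethood \<mu> \<nu> \<le> 1"
  unfolding fuzzy_subsethood_def by (rule inf01_le_1[OF bdd_below_subsethood_terms])

lemma fuzzy_subsethood_le: "fuzzy_subsethood \<mu> \<nu> \<le> 1 - \<mu> U + \<nu> U"
proof -
  have "fuzzy_subsethood \<mu> \<nu> \<le> min 1 (1 - \<mu> U + \<nu> U)"
    unfolding fuzzy_subsethood_def by (rule inf01_le[OF bdd_below_subsethood_terms]) auto
  then show ?thesis by simp
qed

lemma fuzzy_subsethood_antimono:
  assumes "\<And>U. \<mu>' U \<le> \<mu> U"
  shows "fuzzy_subsethood \<mu> \<nu> \<le> fuzzy_subsethood \<mu>' \<nu>"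
  unfolding fuzzy_subsethood_def [of \<mu>']
proof (rule inf01_greatest[OF fuzzy_subsethood_le_1])
  fix s assume "s \<in> {min 1 (1 - \<mu>' U + \<nu> U) | U. True}"
  then obtain U where "s = min 1 (1 - \<mu>' U + \<nu> U)" by blast
  then show "fuzzy_subsethood \<mu> \<nu> \<le> s"
    using fuzzy_subsethood_le_1 fuzzy_subsethood_le[of U] assms[of U] by simp
qed

end

lemma le_fuzzy_subsethood:
  assumes "r \<le> 1" and "\<And>U. \<mu> U \<le> (1 - r) + \<nu> U"
  shows "r \<le> fuzzy_subsethood \<mu> \<nu>"
  unfolding fuzzy_subsethood_def
proof (rule inf01_greatest[OF assms(1)])
  fix s assume "s \<in> {min 1 (1 - \<mu> U + \<nu> U) | U. True}"
  then obtain U where "s = min 1 (1 - \<mu> U + \<nu> U)" by blast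
  then show "r \<le> s" using assms(1) assms(2)[of U] by simp
qed

context
  fixes \<tau> :: "'a set \<Rightarrow> real"
  assumes fuzzy_\<tau>: "fuzzy_set \<tau>"
begin

lemma bdd_above_fuzzy_values: "bdd_above {\<tau> B | B. P B}"
  using fuzzy_\<tau> unfolding fuzzy_set_def by (intro bdd_aboveI[of _ 1]) auto

lemma nbhd_bounds: "0 \<le> nbhd \<tau> x A" "nbhd \<tau> x A \<le> 1"
  unfolding nbhd_def
  using sup01_nonneg[OF bdd_above_fuzzy_values] fuzzy_\<tau> unfolding fuzzy_set_def
  by (auto intro: sup01_least)

lemma fcl_bounds: "0 \<le> fcl \<tau> A x" "fcl \<tau> A x \<le> 1"
  unfolding fcl_def using nbhd_bounds by auto

lemma bdd_above_fint_terms: "bdd_above {min (\<tau> B) (inf01 (\<mu> ` B)) | B. x \<in> B}"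
  using fuzzy_\<tau> unfolding fuzzy_set_def
  by (intro bdd_aboveI[of _ 1]) (auto simp: min_le_iff_disj)

lemma fint_bounds: "0 \<le> fint \<tau> \<mu> x" "fint \<tau> \<mu> x \<le> 1"
  unfolding fint_def
  using sup01_nonneg[OF bdd_above_fint_terms] fuzzy_\<tau> unfolding fuzzy_set_def
  by (auto intro: sup01_least simp: min_le_iff_disj)

lemma preopen_bounds: "0 \<le> preopen \<tau> A" "preopen \<tau> A \<le> 1"
proof -
  have "bdd_below ((\<lambda>x. fint \<tau> (fcl \<tau> A) x) ` A)"
    using fint_bounds by (intro bdd_belowI[of _ 0]) auto
  then show "preopen \<tau> A \<le> 1"
    unfolding preopen_def by (rule inf01_le_1)
  show "0 \<le> preopen \<tau> A"
    unfolding preopen_def using fint_bounds by (intro inf01_greatest) auto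
qed

lemma nbhd_mono: "A \<subseteq> A' \<Longrightarrow> nbhd \<tau> x A \<le> nbhd \<tau> x A'"
  unfolding nbhd_def
  using sup01_nonneg[OF bdd_above_fuzzy_values]
  by (intro sup01_least) (auto intro!: sup01_upper[OF bdd_above_fuzzy_values])

lemma fcl_mono: "A \<subseteq> A' \<Longrightarrow> fcl \<tau> A x \<le> fcl \<tau> A' x"
  unfolding fcl_def using nbhd_mono[of "- A'" "- A" x] by auto

lemma fint_mono:
  assumes "\<And>y. 0 \<le> \<mu> y" and "\<And>y. \<mu> y \<le> \<mu>' y"
  shows "fint \<tau> \<mu> x \<le> fint \<tau> \<mu>' x"
proof -
  have inf_image_mono: "inf01 (\<mu> ` B) \<le> inf01 (\<mu>' ` B)" for B
  proof -
    have bdd: "bdd_below (\<mu> ` B)" using assms(1) by (intro bdd_belowI[of _ 0]) auto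
    show ?thesis
    proof (rule inf01_greatest[OF inf01_le_1[OF bdd]])
      fix s assume "s \<in> \<mu>' ` B"
      then obtain y where "y \<in> B" "s = \<mu>' y" by blast
      then show "inf01 (\<mu> ` B) \<le> s" using inf01_le[OF bdd, of "\<mu> y"] assms(2)[of y] by simp
    qed
  qed
  show ?thesis
    unfolding fint_def
  proof (rule sup01_least)
    show "0 \<le> sup01 {min (\<tau> B) (inf01 (\<mu>' ` B)) | B. x \<in> B}"
      by (rule sup01_nonneg[OF bdd_above_fint_terms])
    fix s assume "s \<in> {min (\<tau> B) (inf01 (\<mu> ` B)) | B. x \<in> B}"
    then obtain B where B: "x \<in> B" "s = min (\<tau> B) (inf01 (\<mu> ` B))" by blast
    have "s \<le> min (\<tau> B) (inf01 (\<mu>' ` B))" using B inf_image_mono[of B] by auto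
    also have "\<dots> \<le> sup01 {min (\<tau> B) (inf01 (\<mu>' ` B)) | B. x \<in> B}"
      using B by (intro sup01_upper[OF bdd_above_fint_terms]) auto
    finally show "s \<le> sup01 {min (\<tau> B) (inf01 (\<mu>' ` B)) | B. x \<in> B}" .
  qed
qed

lemma preopen_le_fint_fcl:
  assumes "x \<in> A" and "A \<subseteq> A'"
  shows "preopen \<tau> A \<le> fint \<tau> (fcl \<tau> A') x"
proof -
  have "preopen \<tau> A \<le> fint \<tau> (fcl \<tau> A) x"
    unfolding preopen_def using fint_bounds assms(1)
    by (intro inf01_le) (auto intro: bdd_belowI[of _ 0])
  also have "\<dots> \<le> fint \<tau> (fcl \<tau> A') x"
    using fcl_bounds fcl_mono assms(2) by (intro fint_mono) auto
  finally show ?thesis .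
qed

lemma preopen_le_pre_nbhd: "x \<in> U \<Longrightarrow> preopen \<tau> U \<le> pre_nbhd \<tau> x U"
  unfolding pre_nbhd_def using preopen_bounds
  by (intro sup01_upper) (auto intro: bdd_aboveI[of _ 1])

end

lemma preopen_le_image_if_prebase_le:
  assumes fuzzy_\<tau>: "fuzzy_set \<tau>" and fuzzy_\<sigma>: "fuzzy_set \<sigma>"
    and prebase: "is_prebase \<tau> \<beta>"
    and "0 \<le> c" and \<beta>_le: "\<And>B. \<beta> B \<le> c + preopen \<sigma> (f ` B)"
  shows "preopen \<tau> U \<le> c + preopen \<sigma> (f ` U)"
proof -
  have "preopen \<tau> U - c \<le> fint \<sigma> (fcl \<sigma> (f ` U)) (f x)" if "x \<in> U" for x
  proof -
    have "\<beta> B \<le> c + fint \<sigma> (fcl \<sigma> (f ` U)) (f x)" if "x \<in> B" "B \<subseteq> U" for B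
      using \<beta>_le[of B] preopen_le_fint_fcl[OF fuzzy_\<sigma>, of "f x" "f ` B" "f ` U"] that
      by force
    then have "sup01 {\<beta> B | B. x \<in> B \<and> B \<subseteq> U} \<le> c + fint \<sigma> (fcl \<sigma> (f ` U)) (f x)"
      using \<open>0 \<le> c\<close> fint_bounds[OF fuzzy_\<sigma>] by (intro sup01_least) force+
    moreover have "preopen \<tau> U \<le> sup01 {\<beta> B | B. x \<in> B \<and> B \<subseteq> U}"
      using preopen_le_pre_nbhd[OF fuzzy_\<tau> \<open>x \<in> U\<close>] prebase unfolding is_prebase_def
      by (meson order_trans)
    ultimately show ?thesis by simp
  qed
  then have "preopen \<tau> U - c \<le> preopen \<sigma> (f ` U)"
    unfolding preopen_def[of \<sigma>] using preopen_bounds(2)[OF fuzzy_\<tau>, of U] \<open>0 \<le> c\<close>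
    by (intro inf01_greatest) auto
  then show ?thesis by simp
qed

theorem lemma3p1:
  fixes \<tau> :: "'a set \<Rightarrow> real" and \<sigma> :: "'b set \<Rightarrow> real"
    and f :: "'a \<Rightarrow> 'b" and \<beta> :: "'a set \<Rightarrow> real"
  assumes "fuzzifying_topology \<tau>" and "fuzzifying_topology \<sigma>"
    and "is_prebase \<tau> \<beta>"
  shows "pre_open_deg \<tau> \<sigma> f = inf01 {min 1 (1 - \<beta> B + preopen \<sigma> (f ` B)) | B. True}"
proof -
  have fuzzy_\<tau>: "fuzzy_set \<tau>" and fuzzy_\<sigma>: "fuzzy_set \<sigma>"
    using assms(1,2) unfolding fuzzifying_topology_def by auto
  have \<beta>_le_1: "\<beta> B \<le> 1" and \<beta>_le_preopen: "\<beta> B \<le> preopen \<tau> B" for B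
    using assms(3) unfolding is_prebase_def fuzzy_set_def by auto
  define g where "g U = preopen \<sigma> (f ` U)" for U
  have g_nonneg: "0 \<le> g U" for U
    unfolding g_def using preopen_bounds(1)[OF fuzzy_\<sigma>] .
  define r where "r = fuzzy_subsethood \<beta> g"
  have "r \<le> 1"
    unfolding r_def using \<beta>_le_1 g_nonneg by (rule fuzzy_subsethood_le_1)
  have "\<beta> B \<le> (1 - r) + preopen \<sigma> (f ` B)" for B
    using fuzzy_subsethood_le[of \<beta> g B] \<beta>_le_1 g_nonneg unfolding r_def g_def by simp
  then have "preopen \<tau> U \<le> (1 - r) + g U" for U
    unfolding g_def using \<open>r \<le> 1\<close>
    by (intro preopen_le_image_if_prebase_le[OF fuzzy_\<tau> fuzzy_\<sigma> assms(3)]) simp_all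
  then have "r \<le> fuzzy_subsethood (preopen \<tau>) g"
    by (rule le_fuzzy_subsethood[OF \<open>r \<le> 1\<close>])
  moreover have "fuzzy_subsethood (preopen \<tau>) g \<le> r"
    unfolding r_def using preopen_bounds(2)[OF fuzzy_\<tau>] g_nonneg \<beta>_le_preopen
    by (rule fuzzy_subsethood_antimono)
  ultimately show ?thesis
    unfolding pre_open_deg_eq_fuzzy_subsethood r_def g_def[abs_def] fuzzy_subsethood_def
    by simp
qed

end
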